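(* Let $N_1,N_2$ be continuous fuzzy negations and $U_1,U_2$ disjunctive uninorms with neutral elements $e_1,e_2\in\,]0,1[$ respectively, such that $U_1(N_1(x),y)=U_2(N_2(x),y)$ for all $x,y\in[0,1]$. If $U_1$ has continuous underlying functions and $N_1\neq N_2$, then $U_2$ also has continuous underlying functions, and there exist idempotent points $a,d\in[0,1]$ of $U_1$ with $a<d$ such that the restriction of $U_1$ to $]a,d[^2$, and likewise the restriction of $U_2$ to $]a,d[^2$, is a linear transformation of some representable uninorm restricted to $]0,1[^2$. Moreover, $U_1$ coincides with $U_2$ on $([0,a]\cup[d,1])^2$.
   Context: A fuzzy negation is a non-increasing map $N:[0,1]\to[0,1]$ with $N(0)=1$, $N(1)=0$. A uninorm is a map $U:[0,1]^2\to[0,1]$ that is commutative, associative, non-decreasing in each variable, and has a neutral element $e\in[0,1]$; it is disjunctive if $U(1,0)=1$. For a uninorm with neutral element $e\in\,]0,1[$, the underlying t-norm is $T_U(x,y)=U(ex,ey)/e$ and the underlying t-conorm is $S_U(x,y)=(U(e+(1-e)x,e+(1-e)y)-e)/(1-e)$, $x,y\in[0,1]$; $U$ has continuous underlying functions if both are continuous. An idempotent point of $U$ is $z$ with $U(z,z)=z$. A uninorm $V$ with neutral element $e\in\,]0,1[$ is representable if there is a continuous strictly increasing $h:[0,1]\to[-\infty,+\infty]$ with $h(0)=-\infty$, $h(e)=0$, $h(1)=+\infty$ and $V(x,y)=h^{-1}(h(x)+h(y))$ for $(x,y)\notin\{(0,1),(1,0)\}$. The restriction of $U$ to $]a,d[^2$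 is a linear transformation of $V$ restricted to $]0,1[^2$ if $U(x,y)=a+(d-a)V\big(\frac{x-a}{d-a},\frac{y-a}{d-a}\big)$ for all $x,y\in\,]a,d[$. *)

theory Defs
  imports "HOL-Analysis.Analysis" "HOL-Library.Extended_Real"
begin

text \<open>All operations are real functions; only their values on [0,1] are relevant.\<close>

definition fuzzy_negation :: "(real \<Rightarrow> real) \<Rightarrow> bool" where
  "fuzzy_negation N \<longleftrightarrow>
     (\<forall>x\<in>{0..1}. N x \<in> {0..1}) \<and>
     (\<forall>x\<in>{0..1}. \<forall>y\<in>{0..1}. x \<le> y \<longrightarrow> N y \<le> N x) \<and>
     N 0 = 1 \<and> N 1 = 0"

definition uninorm :: "(real \<Rightarrow> real \<Rightarrow> real) \<Rightarrow> real \<Rightarrow> bool" where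
  "uninorm U e \<longleftrightarrow>
     e \<in> {0..1} \<and>
     (\<forall>x\<in>{0..1}. \<forall>y\<in>{0..1}. U x y \<in> {0..1}) \<and>
     (\<forall>x\<in>{0..1}. \<forall>y\<in>{0..1}. U x y = U y x) \<and>
     (\<forall>x\<in>{0..1}. \<forall>y\<in>{0..1}. \<forall>z\<in>{0..1}. U (U x y) z = U x (U y z)) \<and>
     (\<forall>x\<in>{0..1}. \<forall>x'\<in>{0..1}. \<forall>y\<in>{0..1}. x \<le> x' \<longrightarrow> U x y \<le> U x' y) \<and>
     (\<forall>x\<in>{0..1}. U e x = x)"

definition disjunctive :: "(real \<Rightarrow> real \<Rightarrow> real) \<Rightarrow> bool" where
  "disjunctive U \<longleftrightarrow> U 1 0 = 1"

definition underlying_tnorm :: "(real \<Rightarrow> real \<Rightarrow> real) \<Rightarrow> real \<Rightarrow> real \<Rightarrow> real \<Rightarrow> real" where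
  "underlying_tnorm U e x y = U (e * x) (e * y) / e"

definition underlying_tconorm :: "(real \<Rightarrow> real \<Rightarrow> real) \<Rightarrow> real \<Rightarrow> real \<Rightarrow> real \<Rightarrow> real" where
  "underlying_tconorm U e x y = (U (e + (1 - e) * x) (e + (1 - e) * y) - e) / (1 - e)"

definition continuous_underlying :: "(real \<Rightarrow> real \<Rightarrow> real) \<Rightarrow> real \<Rightarrow> bool" where
  "continuous_underlying U e \<longleftrightarrow>
     continuous_on ({0..1} \<times> {0..1}) (\<lambda>(x, y). underlying_tnorm U e x y) \<and>
     continuous_on ({0..1} \<times> {0..1}) (\<lambda>(x, y). underlying_tconorm U e x y)"

definition idempotent_point :: "(real \<Rightarrow> real \<Rightarrow> real) \<Rightarrow> real \<Rightarrow> bool" where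
  "idempotent_point U z \<longleftrightarrow> z \<in> {0..1} \<and> U z z = z"

definition representable :: "(real \<Rightarrow> real \<Rightarrow> real) \<Rightarrow> real \<Rightarrow> bool" where
  "representable V e \<longleftrightarrow> uninorm V e \<and> 0 < e \<and> e < 1 \<and>
     (\<exists>h :: real \<Rightarrow> ereal.
        continuous_on {0..1} h \<and> strict_mono_on {0..1} h \<and>
        h 0 = -\<infinity> \<and> h e = 0 \<and> h 1 = \<infinity> \<and>
        (\<forall>x\<in>{0..1}. \<forall>y\<in>{0..1}. (x, y) \<notin> {(0, 1), (1, 0)} \<longrightarrow>
            V x y = the_inv_into {0..1} h (h x + h y)))"

definition linear_transform_on :: "(real \<Rightarrow> real \<Rightarrow> real) \<Rightarrow> real \<Rightarrow> real \<Rightarrow> (real \<Rightarrow> real \<Rightarrow> real) \<Rightarrow> bool" where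
  "linear_transform_on U a d V \<longleftrightarrow>
     (\<forall>x\<in>{a<..<d}. \<forall>y\<in>{a<..<d}.
        U x y = a + (d - a) * V ((x - a) / (d - a)) ((y - a) / (d - a)))"

end

theory Submission
  imports Defs
begin

text \<open>
  Since \<open>N\<^sub>2\<close> is onto \<open>[0,1]\<close>, the functional equation says \<open>U\<^sub>2(s,y) = U\<^sub>1(U\<^sub>1(s,u),y)\<close> with
  \<open>u = U\<^sub>2(e\<^sub>1,e\<^sub>1)\<close> and \<open>U\<^sub>1(u,e\<^sub>2) = e\<^sub>1\<close>; as \<open>N\<^sub>1 \<noteq> N\<^sub>2\<close> forces \<open>e\<^sub>1 \<noteq> e\<^sub>2\<close>, one of \<open>u, e\<^sub>2\<close>
  is a unit \<open>w > e\<^sub>1\<close> of \<open>U\<^sub>1\<close>, with inverse \<open>v\<close>. The powers of \<open>w\<close> and \<open>v\<close> converge to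
  idempotents \<open>d\<close> and \<open>a\<close>, and continuity of \<open>U\<^sub>1\<close> on the squares \<open>[0,e\<^sub>1]\<^sup>2\<close> and \<open>[e\<^sub>1,1]\<^sup>2\<close>
  (intermediate values) makes \<open>]a,d[\<close> a divisible Archimedean ordered group. Hoelder's theorem
  embeds it onto \<open>(\<real>,+)\<close>, which is representability of \<open>U\<^sub>1\<close> on \<open>]a,d[\<close>; \<open>U\<^sub>2\<close> is the same
  group with neutral element moved to \<open>e\<^sub>2\<close>. Points outside \<open>]a,d[\<close> are translates of \<open>a\<close> or \<open>d\<close>
  and absorb \<open>u\<close>, so \<open>U\<^sub>1 = U\<^sub>2\<close> there, and translation by a unit is a homeomorphism of
  \<open>[0,1]\<close>, which transfers continuity to the underlying functions of \<open>U\<^sub>2\<close>.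
\<close>

section \<open>Powers in ordered commutative monoids\<close>

fun op_power :: "('a \<Rightarrow> 'a \<Rightarrow> 'a) \<Rightarrow> 'a \<Rightarrow> 'a \<Rightarrow> nat \<Rightarrow> 'a" where
  "op_power f e x 0 = e"
| "op_power f e x (Suc n) = f x (op_power f e x n)"

locale ordered_comm_monoid_on =
  fixes A :: "'a::linorder set" and f :: "'a \<Rightarrow> 'a \<Rightarrow> 'a" and e :: 'a
  assumes closed: "x \<in> A \<Longrightarrow> y \<in> A \<Longrightarrow> f x y \<in> A"
    and assoc: "x \<in> A \<Longrightarrow> y \<in> A \<Longrightarrow> z \<in> A \<Longrightarrow> f (f x y) z = f x (f y z)"
    and commute: "x \<in> A \<Longrightarrow> y \<in> A \<Longrightarrow> f x y = f y x"
    and neutral_in: "e \<in> A"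
    and neutral: "x \<in> A \<Longrightarrow> f e x = x"
    and mono: "x \<in> A \<Longrightarrow> y \<in> A \<Longrightarrow> z \<in> A \<Longrightarrow> x \<le> y \<Longrightarrow> f x z \<le> f y z"
begin

abbreviation pow where "pow \<equiv> op_power f e"

lemma neutral_right: "x \<in> A \<Longrightarrow> f x e = x"
  using commute[OF _ neutral_in] neutral by simp

lemma mono_right: "x \<in> A \<Longrightarrow> y \<in> A \<Longrightarrow> z \<in> A \<Longrightarrow> x \<le> y \<Longrightarrow> f z x \<le> f z y"
  using mono commute by metis

lemma mono_both:
  "x \<in> A \<Longrightarrow> y \<in> A \<Longrightarrow> x' \<in> A \<Longrightarrow> y' \<in> A \<Longrightarrow> x \<le> x' \<Longrightarrow> y \<le> y' \<Longrightarrow> f x y \<le> f x' y'"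
  by (meson closed mono mono_right order_trans)

lemma left_commute: "x \<in> A \<Longrightarrow> y \<in> A \<Longrightarrow> z \<in> A \<Longrightarrow> f x (f y z) = f y (f x z)"
  by (metis assoc commute)

lemma power_closed: "x \<in> A \<Longrightarrow> pow x n \<in> A"
  by (induction n) (auto simp: neutral_in closed)

lemma power_add: "x \<in> A \<Longrightarrow> pow x (m + n) = f (pow x m) (pow x n)"
  by (induction m) (auto simp: neutral power_closed assoc)

lemma power_mult: "x \<in> A \<Longrightarrow> pow x (m * n) = pow (pow x m) n"
proof (induction n)
  case (Suc n)
  have "m * Suc n = m + m * n" by simp
  then show ?case using Suc by (simp only: power_add op_power.simps)
qed simp

lemma power_distrib: "x \<in> A \<Longrightarrow> y \<in> A \<Longrightarrow> pow (f x y) n = f (pow x n) (pow y n)"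
  by (induction n) (simp_all add: neutral neutral_in assoc closed power_closed left_commute)

lemma power_neutral: "pow e n = e"
  by (induction n) (auto simp: neutral neutral_in)

lemma power_mono: "x \<in> A \<Longrightarrow> y \<in> A \<Longrightarrow> x \<le> y \<Longrightarrow> pow x n \<le> pow y n"
  by (induction n) (auto intro!: mono_both power_closed)

lemma power_increasing:
  assumes "x \<in> A" "e \<le> x" "m \<le> n"
  shows "pow x m \<le> pow x n"
proof -
  obtain k where k: "n = m + k" using \<open>m \<le> n\<close> le_Suc_ex by blast
  have "e \<le> pow x k" using power_mono[OF neutral_in assms(1,2), of k] by (simp add: power_neutral)
  then have "f (pow x m) e \<le> f (pow x m) (pow x k)"
    by (intro mono_right) (auto simp: power_closed assms neutral_in)
  then show ?thesis using k by (simp add: power_add assms neutral_right power_closed)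
qed

lemma power_decreasing:
  assumes "x \<in> A" "x \<le> e" "m \<le> n"
  shows "pow x n \<le> pow x m"
proof -
  obtain k where k: "n = m + k" using \<open>m \<le> n\<close> le_Suc_ex by blast
  have "pow x k \<le> e" using power_mono[OF assms(1) neutral_in assms(2), of k] by (simp add: power_neutral)
  then have "f (pow x m) (pow x k) \<le> f (pow x m) e"
    by (intro mono_right) (auto simp: power_closed assms neutral_in)
  then show ?thesis using k by (simp add: power_add assms neutral_right power_closed)
qed

lemma power_inverse: "x \<in> A \<Longrightarrow> y \<in> A \<Longrightarrow> f x y = e \<Longrightarrow> f (pow x n) (pow y n) = e"
  using power_distrib[of x y n] power_neutral by simp

end

section \<open>Hoelder's theorem for groups on real intervals\<close>

locale archimedean_group_on_interval = ordered_comm_monoid_on A f e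
  for A :: "real set" and f e +
  fixes w v :: real
  assumes inverse_exists: "x \<in> A \<Longrightarrow> \<exists>y\<in>A. f x y = e"
    and unit_in: "w \<in> A" "v \<in> A"
    and unit_inverse: "f w v = e"
    and neutral_less_unit: "e < w"
    and archimedean: "x \<in> A \<Longrightarrow> z \<in> A \<Longrightarrow> e < z \<Longrightarrow> \<exists>n. x \<le> pow z n"
    and halving: "x \<in> A \<Longrightarrow> e < x \<Longrightarrow> \<exists>z\<in>A. f z z = x"
    and interval: "is_interval A"
begin

lemma cancel:
  assumes "x \<in> A" "y \<in> A" "z \<in> A" "f x z = f y z"
  shows "x = y"
proof -
  obtain z' where z': "z' \<in> A" "f z z' = e" using inverse_exists assms(3) by blast
  have "x = f (f x z) z'" using assoc[OF assms(1,3) z'(1)] z'(2) neutral_right[OF assms(1)] by simp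
  also have "\<dots> = y" using assoc[OF assms(2,3) z'(1)] z'(2) neutral_right[OF assms(2)] assms(4) by simp
  finally show ?thesis .
qed

lemma strict_mono_left: "x \<in> A \<Longrightarrow> y \<in> A \<Longrightarrow> z \<in> A \<Longrightarrow> x < y \<Longrightarrow> f x z < f y z"
  using mono cancel by (metis less_le)

lemma strict_mono_right: "x \<in> A \<Longrightarrow> y \<in> A \<Longrightarrow> z \<in> A \<Longrightarrow> x < y \<Longrightarrow> f z x < f z y"
  using strict_mono_left commute by metis

lemma archimedean_below:
  assumes x: "x \<in> A" shows "\<exists>n. pow v n \<le> x"
proof -
  obtain x' where x': "x' \<in> A" "f x x' = e" using inverse_exists x by blast
  obtain n where n: "x' \<le> pow w n" using archimedean[OF x'(1) unit_in(1) neutral_less_unit] by blast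
  have "f (pow v n) (pow w n) \<le> f x (pow w n)"
    using mono_right[OF x'(1) power_closed[OF unit_in(1)] x n] x'(2)
      power_inverse[OF unit_in(1,2) unit_inverse, of n] commute[OF power_closed power_closed, OF unit_in]
    by simp
  then have "pow v n \<le> x"
    using strict_mono_left[OF x power_closed[OF unit_in(2)] power_closed[OF unit_in(1)], of n n]
    by (meson not_le)
  then show ?thesis ..
qed

text \<open>The integer power \<open>w\<^sup>m\<close> is \<open>w\<^sup>p v\<^sup>q\<close> for any \<open>p - q = m\<close>.\<close>

lemma power_pair_shift: "f (pow w (p + k)) (pow v (q + k)) = f (pow w p) (pow v q)"
proof -
  have "f (pow w (p + k)) (pow v (q + k)) = f (f (pow w p) (pow w k)) (f (pow v q) (pow v k))"
    by (simp add: power_add unit_in)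
  also have "\<dots> = f (f (pow w p) (pow v q)) (f (pow w k) (pow v k))"
    by (metis assoc left_commute power_closed unit_in closed)
  also have "\<dots> = f (pow w p) (pow v q)"
    by (simp add: power_inverse unit_in unit_inverse neutral_right closed power_closed)
  finally show ?thesis .
qed

lemma power_pair_eq: "p + q' = p' + q \<Longrightarrow> f (pow w p) (pow v q) = f (pow w p') (pow v q')"
  by (metis add.commute power_pair_shift)

definition int_pow :: "int \<Rightarrow> real" where
  "int_pow m = f (pow w (nat m)) (pow v (nat (- m)))"

lemma int_pow_diff: "int_pow (int p - int q) = f (pow w p) (pow v q)"
  unfolding int_pow_def by (rule power_pair_eq) linarith

lemma int_pow_in: "int_pow m \<in> A"
  by (simp add: int_pow_def closed power_closed unit_in)

lemma int_pow_add: "int_pow (i + j) = f (int_pow i) (int_pow j)"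
proof -
  obtain p q p' q' where i: "i = int p - int q" and j: "j = int p' - int q'"
    by (metis diff_0_right of_nat_0 int_cases diff_0 minus_diff_eq)
  have "i + j = int (p + p') - int (q + q')" using i j by simp
  then have "int_pow (i + j) = f (pow w (p + p')) (pow v (q + q'))" by (simp only: int_pow_diff)
  also have "\<dots> = f (f (pow w p) (pow w p')) (f (pow v q) (pow v q'))"
    by (simp add: power_add unit_in)
  also have "\<dots> = f (int_pow i) (int_pow j)"
    unfolding i j int_pow_diff by (metis assoc left_commute power_closed unit_in closed)
  finally show ?thesis .
qed

lemma int_pow_nat: "int_pow (int n) = pow w n"
  by (simp add: int_pow_def neutral_right power_closed unit_in)

lemma int_pow_neg_nat: "int_pow (- int n) = pow v n"
  using int_pow_diff[of 0 n] by (simp add: neutral power_closed unit_in)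

lemma int_pow_0: "int_pow 0 = e"
  using int_pow_nat[of 0] by simp

lemma int_pow_1: "int_pow 1 = w"
  using int_pow_nat[of 1] by (simp add: neutral_right unit_in)

lemma int_pow_mult: "int_pow (m * int n) = pow (int_pow m) n"
proof (induction n)
  case (Suc n)
  have "m * int (Suc n) = m + m * int n" by (simp add: algebra_simps)
  then show ?case using Suc by (simp add: int_pow_add)
qed (simp add: int_pow_0)

lemma int_pow_strict_mono: "i < j \<Longrightarrow> int_pow i < int_pow j"
proof -
  assume ij: "i < j"
  have "w \<le> pow w (nat (j - i))"
    using power_increasing[OF unit_in(1) _, of 1 "nat (j - i)"] neutral_less_unit ij
    by (simp add: neutral_right unit_in)
  then have "e < int_pow (j - i)" using int_pow_nat[of "nat (j - i)"] ij neutral_less_unit by simp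
  then show ?thesis
    using strict_mono_right[OF neutral_in int_pow_in int_pow_in, of "j - i" i] int_pow_add[of i "j - i"]
    by (simp add: neutral_right int_pow_in)
qed

lemma int_pow_le_iff: "int_pow i \<le> int_pow j \<longleftrightarrow> i \<le> j"
  by (metis int_pow_strict_mono le_less not_le)

lemma int_pow_floor:
  assumes y: "y \<in> A" shows "\<exists>m. int_pow m \<le> y \<and> y < int_pow (m + 1)"
proof -
  obtain n where n: "pow v n \<le> y" using archimedean_below y by blast
  obtain N where N: "y \<le> pow w N" using archimedean[OF y unit_in(1) neutral_less_unit] by blast
  define S where "S = {m. - int n \<le> m \<and> m \<le> int N \<and> int_pow m \<le> y}"
  have fin: "finite S" unfolding S_def by (rule finite_subset[of _ "{- int n..int N}"]) auto
  have "- int n \<in> S" using n N unfolding S_def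
    by (simp add: int_pow_le_iff[symmetric] int_pow_nat int_pow_neg_nat)
  then have mS: "Max S \<in> S" using fin Max_in by blast
  have "y < int_pow (Max S + 1)"
  proof (rule ccontr)
    assume "\<not> y < int_pow (Max S + 1)"
    then have "Max S + 1 \<in> S"
      using mS N int_pow_le_iff[of "Max S + 1" "int N"] unfolding S_def by (auto simp: int_pow_nat)
    then show False using fin Max_ge by fastforce
  qed
  then show ?thesis using mS unfolding S_def by auto
qed

text \<open>Hoelder's embedding into the reals: a logarithm to the base \<open>w\<close>.\<close>

definition hoelder_exponents :: "real \<Rightarrow> real set" where
  "hoelder_exponents x = {real_of_int m / real n | m n. 0 < n \<and> int_pow m \<le> pow x n}"

definition hoelder_log :: "real \<Rightarrow> real" where
  "hoelder_log x = Sup (hoelder_exponents x)"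

lemma exponent_le_exponent:
  assumes x: "x \<in> A" and n: "0 < n" "0 < n'" and l: "int_pow m' \<le> pow x n'" and u: "pow x n \<le> int_pow m"
  shows "real_of_int m' / real n' \<le> real_of_int m / real n"
proof -
  have "int_pow (m' * int n) = pow (int_pow m') n" by (rule int_pow_mult)
  also have "\<dots> \<le> pow (pow x n') n" by (rule power_mono[OF int_pow_in power_closed[OF x] l])
  also have "\<dots> = pow (pow x n) n'" by (simp add: power_mult[symmetric] x mult.commute)
  also have "\<dots> \<le> pow (int_pow m) n'" by (rule power_mono[OF power_closed[OF x] int_pow_in u])
  also have "\<dots> = int_pow (m * int n')" by (rule int_pow_mult[symmetric])
  finally have "real_of_int m' * real n \<le> real_of_int m * real n'"
    unfolding int_pow_le_iff by (metis of_int_le_iff of_int_mult of_int_of_nat_eq)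
  then show ?thesis using n by (simp add: divide_simps)
qed

lemma hoelder_exponents_nonempty:
  assumes x: "x \<in> A" shows "hoelder_exponents x \<noteq> {}"
proof -
  obtain m where "int_pow m \<le> x" using int_pow_floor x by blast
  then have "real_of_int m / real (1::nat) \<in> hoelder_exponents x"
    unfolding hoelder_exponents_def by (intro CollectI exI[of _ m] exI[of _ "1::nat"]) (simp add: neutral_right x)
  then show ?thesis by blast
qed

lemma hoelder_exponents_bdd:
  assumes x: "x \<in> A" shows "bdd_above (hoelder_exponents x)"
proof -
  obtain m where m: "x < int_pow (m + 1)" using int_pow_floor x by blast
  have "r \<le> real_of_int (m + 1) / real (1::nat)" if "r \<in> hoelder_exponents x" for r
    using that exponent_le_exponent[OF x, of 1 _ _ "m + 1"] m unfolding hoelder_exponents_def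
    by (auto simp: neutral_right x)
  then show ?thesis unfolding bdd_above_def by auto
qed

lemma hoelder_log_lower:
  "x \<in> A \<Longrightarrow> 0 < n \<Longrightarrow> int_pow m \<le> pow x n \<Longrightarrow> real_of_int m / real n \<le> hoelder_log x"
  unfolding hoelder_log_def
  by (rule cSup_upper[OF _ hoelder_exponents_bdd]) (auto simp: hoelder_exponents_def)

lemma hoelder_log_upper:
  "x \<in> A \<Longrightarrow> 0 < n \<Longrightarrow> pow x n \<le> int_pow m \<Longrightarrow> hoelder_log x \<le> real_of_int m / real n"
  unfolding hoelder_log_def
  by (rule cSup_least[OF hoelder_exponents_nonempty]) (auto simp: hoelder_exponents_def intro: exponent_le_exponent)

lemma hoelder_log_bracket:
  assumes "x \<in> A" "0 < n"
  obtains m where "int_pow m \<le> pow x n" "pow x n \<le> int_pow (m + 1)"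
    "real_of_int m / real n \<le> hoelder_log x" "hoelder_log x \<le> real_of_int m / real n + 1 / real n"
proof -
  obtain m where m: "int_pow m \<le> pow x n" "pow x n < int_pow (m + 1)"
    using int_pow_floor power_closed[OF assms(1)] by blast
  then show ?thesis
    using that hoelder_log_lower[OF assms m(1)] hoelder_log_upper[OF assms, of "m + 1"]
    by (simp add: add_divide_distrib)
qed

lemma hoelder_log_add:
  assumes x: "x \<in> A" and y: "y \<in> A"
  shows "hoelder_log (f x y) = hoelder_log x + hoelder_log y"
proof -
  have approx: "\<bar>hoelder_log (f x y) - hoelder_log x - hoelder_log y\<bar> \<le> 2 / real n" if n: "0 < n" for n
  proof -
    obtain m1 where m1: "int_pow m1 \<le> pow x n" "pow x n \<le> int_pow (m1 + 1)"
      "real_of_int m1 / real n \<le> hoelder_log x" "hoelder_log x \<le> real_of_int m1 / real n + 1 / real n"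
      using hoelder_log_bracket[OF x n] by blast
    obtain m2 where m2: "int_pow m2 \<le> pow y n" "pow y n \<le> int_pow (m2 + 1)"
      "real_of_int m2 / real n \<le> hoelder_log y" "hoelder_log y \<le> real_of_int m2 / real n + 1 / real n"
      using hoelder_log_bracket[OF y n] by blast
    have xy: "pow (f x y) n = f (pow x n) (pow y n)" by (rule power_distrib[OF x y])
    have "int_pow (m1 + m2) \<le> pow (f x y) n" unfolding xy int_pow_add
      by (rule mono_both) (auto simp: int_pow_in power_closed x y m1 m2)
    then have "real_of_int (m1 + m2) / real n \<le> hoelder_log (f x y)"
      using hoelder_log_lower[OF closed[OF x y] n] by blast
    moreover have "pow (f x y) n \<le> int_pow ((m1 + 1) + (m2 + 1))"
      unfolding xy int_pow_add[of "m1 + 1" "m2 + 1"]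
      by (rule mono_both) (auto simp: int_pow_in power_closed x y m1 m2)
    then have "hoelder_log (f x y) \<le> real_of_int ((m1 + 1) + (m2 + 1)) / real n"
      using hoelder_log_upper[OF closed[OF x y] n] by blast
    ultimately show ?thesis using m1(3,4) m2(3,4) by (simp add: add_divide_distrib abs_le_iff)
  qed
  show ?thesis
  proof (rule ccontr)
    let ?t = "\<bar>hoelder_log (f x y) - hoelder_log x - hoelder_log y\<bar>"
    assume "\<not> ?thesis"
    then obtain n where n: "n \<noteq> 0" "inverse (real n) < ?t / 2"
      using real_arch_inverse[of "?t / 2"] by auto
    then show False using approx[of n] by (simp add: field_simps)
  qed
qed

lemma hoelder_log_neutral: "hoelder_log e = 0"
  using hoelder_log_add[OF neutral_in neutral_in] by (simp add: neutral neutral_in)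

lemma hoelder_log_power: "x \<in> A \<Longrightarrow> hoelder_log (pow x n) = real n * hoelder_log x"
  by (induction n) (auto simp: hoelder_log_neutral hoelder_log_add power_closed algebra_simps)

lemma hoelder_log_int_pow: "hoelder_log (int_pow m) = real_of_int m"
proof -
  have "hoelder_log w = 1"
    using hoelder_log_lower[of w 1 1] hoelder_log_upper[of w 1 1]
    by (simp add: unit_in int_pow_1 neutral_right)
  then have "hoelder_log (int_pow (int n)) = real n" for n
    by (simp add: int_pow_nat hoelder_log_power unit_in)
  moreover have "hoelder_log (int_pow (- int n)) = - real n" for n
    using hoelder_log_add[OF int_pow_in int_pow_in, of "int n" "- int n"] \<open>hoelder_log (int_pow (int n)) = real n\<close>
    by (simp add: int_pow_add[symmetric] int_pow_0 hoelder_log_neutral)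
  ultimately show ?thesis by (cases m rule: int_cases2) auto
qed

lemma hoelder_log_strict_mono:
  assumes x: "x \<in> A" and y: "y \<in> A" and xy: "x < y"
  shows "hoelder_log x < hoelder_log y"
proof -
  obtain x' where x': "x' \<in> A" "f x x' = e" using inverse_exists x by blast
  define z where "z = f y x'"
  have z: "z \<in> A" using z_def closed y x' by simp
  have yz: "f x z = y" unfolding z_def using left_commute[OF x y x'(1)] x' neutral_right y by simp
  have ez: "e < z" using xy yz mono_right[OF z neutral_in x] neutral_right[OF x] by force
  obtain n where n: "w \<le> pow z n" using archimedean[OF unit_in(1) z ez] by blast
  have n0: "0 < n" using n neutral_less_unit by (cases n) auto
  have "real_of_int 1 / real n \<le> hoelder_log z"
    by (rule hoelder_log_lower[OF z n0]) (simp add: int_pow_1 n)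
  moreover have "0 < real_of_int 1 / real n" using n0 by simp
  ultimately have "0 < hoelder_log z" by linarith
  then show ?thesis using hoelder_log_add[OF x z] yz by simp
qed

lemma hoelder_log_less_iff:
  assumes "x \<in> A" "y \<in> A" shows "hoelder_log x < hoelder_log y \<longleftrightarrow> x < y"
  using hoelder_log_strict_mono[OF assms] hoelder_log_strict_mono[OF assms(2,1)]
  by (cases x y rule: linorder_cases) auto

lemma small_power_roots: "\<exists>r\<in>A. pow r (2 ^ k) = w"
proof (induction k)
  case (Suc k)
  then obtain r where r: "r \<in> A" "pow r (2 ^ k) = w" by blast
  have "e < r"
  proof (rule ccontr)
    assume "\<not> e < r"
    then have "pow r (2 ^ k) \<le> e" using power_mono[OF r(1) neutral_in, of "2 ^ k"] by (simp add: power_neutral)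
    then show False using r(2) neutral_less_unit by simp
  qed
  then obtain s where s: "s \<in> A" "f s s = r" using halving r by blast
  have "pow s (2 ^ Suc k) = pow (pow s 2) (2 ^ k)" by (simp add: power_mult[symmetric] s(1))
  also have "pow s 2 = r" using s by (simp add: numeral_2_eq_2 neutral_right)
  finally show ?case using s r by auto
qed (use unit_in in \<open>auto simp: neutral_right\<close>)

lemma hoelder_log_continuous: "continuous_on A hoelder_log"
  unfolding continuous_on_iff
proof (intro ballI allI impI)
  fix x and eps :: real
  assume x: "x \<in> A" and eps: "0 < eps"
  obtain k :: nat where k: "1 / eps < 2 ^ k" using real_arch_pow[of 2 "1/eps"] by auto
  obtain r where r: "r \<in> A" "pow r (2 ^ k) = w" using small_power_roots by blast
  have hr: "hoelder_log r = 1 / 2 ^ k"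
    using hoelder_log_power[OF r(1), of "2 ^ k"] r(2) hoelder_log_int_pow[of 1]
    by (simp add: int_pow_1 field_simps)
  obtain r' where r': "r' \<in> A" "f r r' = e" using inverse_exists r by blast
  have hr': "hoelder_log r' = - (1 / 2 ^ k)"
    using hoelder_log_add[OF r(1) r'(1)] r' hr hoelder_log_neutral by simp
  have "e < r" "r' < e"
    using hr hr' hoelder_log_neutral hoelder_log_less_iff[OF neutral_in r(1)] hoelder_log_less_iff[OF r'(1) neutral_in]
    by simp_all
  then have xr: "x < f x r" "f x r' < x"
    using strict_mono_right[OF neutral_in r(1) x] strict_mono_right[OF r'(1) neutral_in x]
    by (simp_all add: neutral_right x)
  show "\<exists>d>0. \<forall>y\<in>A. dist y x < d \<longrightarrow> dist (hoelder_log y) (hoelder_log x) < eps"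
  proof (intro exI[of _ "min (f x r - x) (x - f x r')"] conjI ballI impI)
    show "0 < min (f x r - x) (x - f x r')" using xr by simp
    fix y assume y: "y \<in> A" "dist y x < min (f x r - x) (x - f x r')"
    then have "f x r' < y" "y < f x r" by (simp_all add: dist_real_def abs_less_iff)
    then have "hoelder_log (f x r') < hoelder_log y" "hoelder_log y < hoelder_log (f x r)"
      using hoelder_log_less_iff[OF closed[OF x r'(1)] y(1)] hoelder_log_less_iff[OF y(1) closed[OF x r(1)]]
      by simp_all
    moreover have "1 / 2 ^ k < eps" using k eps by (simp add: field_simps)
    ultimately show "dist (hoelder_log y) (hoelder_log x) < eps"
      using hoelder_log_add[OF x r(1)] hoelder_log_add[OF x r'(1)] hr hr'
      unfolding dist_real_def by linarith
  qed
qed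

lemma hoelder_log_surj: "\<exists>x\<in>A. hoelder_log x = r"
proof -
  define N where "N = nat \<lceil>\<bar>r\<bar>\<rceil>"
  have sub: "{int_pow (- int N)..int_pow (int N)} \<subseteq> A"
    using interval[unfolded is_interval_1] int_pow_in by (metis atLeastAtMost_iff subsetI)
  have "hoelder_log (int_pow (- int N)) \<le> r" "r \<le> hoelder_log (int_pow (int N))"
    unfolding hoelder_log_int_pow N_def by linarith+
  moreover have "int_pow (- int N) \<le> int_pow (int N)" using int_pow_le_iff by simp
  moreover have "continuous_on {int_pow (- int N)..int_pow (int N)} hoelder_log"
    using continuous_on_subset[OF hoelder_log_continuous sub] .
  ultimately obtain x where "int_pow (- int N) \<le> x" "x \<le> int_pow (int N)" "hoelder_log x = r"
    using IVT'[of hoelder_log "int_pow (- int N)" r "int_pow (int N)"] by blast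
  then show ?thesis using sub by auto
qed

theorem hoelder_embedding:
  "\<exists>h :: real \<Rightarrow> real. strict_mono_on A h \<and> (\<forall>x\<in>A. \<forall>y\<in>A. h (f x y) = h x + h y) \<and> (\<forall>r. \<exists>x\<in>A. h x = r)"
proof -
  have "strict_mono_on A hoelder_log" by (rule strict_mono_onI) (rule hoelder_log_strict_mono)
  then show ?thesis using hoelder_log_add hoelder_log_surj by blast
qed

end

section \<open>Representable uninorms from additive isomorphisms\<close>

lemma representable_of_generator:
  fixes H :: "real \<Rightarrow> ereal"
  assumes mono: "strict_mono_on {0..1} H" and surj: "H ` {0..1} = UNIV"
  shows "representable (\<lambda>x y. the_inv_into {0..1} H (H x + H y)) (the_inv_into {0..1} H 0)"
proof -
  define G where "G = the_inv_into {0..1} H"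
  have inj: "inj_on H {0..1}" using mono by (rule strict_mono_on_imp_inj_on)
  have G01: "G z \<in> {0..1}" for z
    unfolding G_def using the_inv_into_into[OF inj, of z "{0..1}"] surj by auto
  have HG: "H (G z) = z" for z unfolding G_def using f_the_inv_into_f[OF inj, of z] surj by auto
  have GH: "p \<in> {0..1} \<Longrightarrow> G (H p) = p" for p unfolding G_def using the_inv_into_f_f[OF inj] by blast
  have Hmono: "p \<in> {0..1} \<Longrightarrow> q \<in> {0..1} \<Longrightarrow> p \<le> q \<Longrightarrow> H p \<le> H q" for p q
    using mono by (metis order_le_less strict_mono_onD)
  have Gmono: "G z \<le> G z'" if "z \<le> z'" for z z'
  proof (rule ccontr)
    assume "\<not> G z \<le> G z'"
    then have "H (G z') < H (G z)" using mono G01 by (simp add: strict_mono_onD)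
    then show False using that HG by simp
  qed
  have H0: "H 0 = -\<infinity>" and H1: "H 1 = \<infinity>"
    using Hmono[of 0 "G (-\<infinity>)"] Hmono[of "G \<infinity>" 1] G01 HG by auto
  define f where "f = G 0"
  have "f \<noteq> 0" "f \<noteq> 1" using HG[of 0] H0 H1 unfolding f_def by auto
  then have f: "0 < f" "f < 1" using G01[of 0] unfolding f_def by auto
  have "uninorm (\<lambda>x y. G (H x + H y)) f"
    unfolding uninorm_def
  proof (intro conjI ballI impI)
    show "f \<in> {0..1}" using f by simp
    show "G (H x + H y) \<in> {0..1}" for x y by (rule G01)
    show "G (H x + H y) = G (H y + H x)" for x y by (simp add: add.commute)
    show "G (H (G (H x + H y)) + H z) = G (H x + H (G (H y + H z)))" for x y z
      by (simp add: HG add.assoc)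
    show "G (H x + H y) \<le> G (H x' + H y)" if "x \<in> {0..1}" "x' \<in> {0..1}" "x \<le> x'" for x x' y
      by (intro Gmono add_right_mono Hmono that)
    show "G (H f + H x) = x" if "x \<in> {0..1}" for x using that by (simp add: f_def HG GH)
  qed
  moreover have "continuous_on {0..1} H"
    by (rule continuous_onI_mono) (auto simp: surj intro: Hmono)
  ultimately show ?thesis
    unfolding representable_def using f mono H0 H1 HG[of 0]
    by (intro conjI exI[of _ H]) (auto simp: f_def G_def)
qed

definition rescaled_generator :: "real \<Rightarrow> real \<Rightarrow> (real \<Rightarrow> real) \<Rightarrow> real \<Rightarrow> ereal" where
  "rescaled_generator a d k p =
     (if p \<le> 0 then -\<infinity> else if 1 \<le> p then \<infinity> else ereal (k (a + (d - a) * p)))"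

lemma rescaled_generator_rescale:
  assumes "a < d" "x \<in> {a<..<d}"
  shows "rescaled_generator a d k ((x - a) / (d - a)) = ereal (k x)"
proof -
  have "0 < (x - a) / (d - a)" "(x - a) / (d - a) < 1" using assms by (auto simp: field_simps)
  moreover have "a + (d - a) * ((x - a) / (d - a)) = x" using assms by simp
  ultimately show ?thesis by (simp only: rescaled_generator_def not_le[symmetric] if_False)
qed

lemma rescaled_generator_strict_mono:
  assumes ad: "a < d" and k: "strict_mono_on {a<..<d} k"
  shows "strict_mono_on {0..1} (rescaled_generator a d k)"
proof (rule strict_mono_onI)
  fix p q :: real assume pq: "p \<in> {0..1}" "q \<in> {0..1}" "p < q"
  show "rescaled_generator a d k p < rescaled_generator a d k q"
  proof (cases "p = 0 \<or> q = 1")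
    case False
    then have "0 < p" "q < 1" using pq by auto
    moreover have "(d - a) * p < (d - a) * q" "(d - a) * q < d - a" "0 < (d - a) * p"
      using pq ad \<open>0 < p\<close> \<open>q < 1\<close> by (simp_all add: mult_less_cancel_left1)
    ultimately have "a + (d - a) * p \<in> {a<..<d}" "a + (d - a) * q \<in> {a<..<d}"
      "a + (d - a) * p < a + (d - a) * q"
      by auto
    then show ?thesis using pq False k by (auto simp: rescaled_generator_def strict_mono_on_def)
  qed (use pq in \<open>auto simp: rescaled_generator_def\<close>)
qed

lemma rescaled_generator_surj:
  assumes ad: "a < d" and k: "\<forall>r. \<exists>x\<in>{a<..<d}. k x = r"
  shows "rescaled_generator a d k ` {0..1} = UNIV"
proof -
  have "ereal r \<in> rescaled_generator a d k ` {0..1}" for r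
  proof -
    obtain x where x: "x \<in> {a<..<d}" "k x = r" using k by blast
    then have "(x - a) / (d - a) \<in> {0..1}" using ad by (auto simp: field_simps)
    then show ?thesis using rescaled_generator_rescale[OF ad x(1)] x(2) by (metis image_eqI)
  qed
  moreover have "-\<infinity> \<in> rescaled_generator a d k ` {0..1}" "\<infinity> \<in> rescaled_generator a d k ` {0..1}"
    by (force simp: rescaled_generator_def intro: image_eqI[of _ _ 0] image_eqI[of _ _ 1])+
  ultimately have "z \<in> rescaled_generator a d k ` {0..1}" for z by (cases z) auto
  then show ?thesis by blast
qed

lemma representable_linear_transform_of_additive_iso:
  fixes U :: "real \<Rightarrow> real \<Rightarrow> real" and k :: "real \<Rightarrow> real"
  assumes ad: "a < d" and k_mono: "strict_mono_on {a<..<d} k" and k_surj: "\<forall>r. \<exists>x\<in>{a<..<d}. k x = r"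
    and closed: "\<And>x y. x \<in> {a<..<d} \<Longrightarrow> y \<in> {a<..<d} \<Longrightarrow> U x y \<in> {a<..<d}"
    and additive: "\<And>x y. x \<in> {a<..<d} \<Longrightarrow> y \<in> {a<..<d} \<Longrightarrow> k (U x y) = k x + k y"
  shows "\<exists>V f. representable V f \<and> linear_transform_on U a d V"
proof -
  let ?H = "rescaled_generator a d k"
  define V where "V x y = the_inv_into {0..1} ?H (?H x + ?H y)" for x y
  have H_mono: "strict_mono_on {0..1} ?H" by (rule rescaled_generator_strict_mono[OF ad k_mono])
  have "linear_transform_on U a d V"
    unfolding linear_transform_on_def
  proof (intro ballI)
    fix x y assume x: "x \<in> {a<..<d}" and y: "y \<in> {a<..<d}"
    have "(U x y - a) / (d - a) \<in> {0..1}" using closed[OF x y] ad by (auto simp: field_simps)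
    then have "V ((x - a) / (d - a)) ((y - a) / (d - a)) = (U x y - a) / (d - a)"
      using rescaled_generator_rescale[OF ad] x y closed[OF x y] additive[OF x y] H_mono
      by (auto simp: V_def intro!: the_inv_into_f_eq strict_mono_on_imp_inj_on)
    then show "U x y = a + (d - a) * V ((x - a) / (d - a)) ((y - a) / (d - a))"
      using ad by simp
  qed
  moreover have "representable V (the_inv_into {0..1} ?H 0)"
    unfolding V_def by (rule representable_of_generator[OF H_mono rescaled_generator_surj[OF ad k_surj]])
  ultimately show ?thesis by blast
qed

lemma continuous_underlying_lower_square:
  assumes "continuous_underlying U e" "0 < e"
  shows "continuous_on ({0..e} \<times> {0..e}) (\<lambda>(x, y). U x y)"
proof -
  let ?T = "\<lambda>(x, y). U (e * x) (e * y) / e"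
  have "continuous_on ({0..1} \<times> {0..1}) ?T"
    using assms(1) unfolding continuous_underlying_def underlying_tnorm_def by blast
  moreover have "continuous_on ({0..e} \<times> {0..e}) (\<lambda>z. (fst z / e, snd z / e))"
    by (intro continuous_intros) (use assms(2) in auto)
  moreover have "(\<lambda>z. (fst z / e, snd z / e)) ` ({0..e} \<times> {0..e}) \<subseteq> {0..1} \<times> {0..1}"
    using assms(2) by auto
  ultimately have "continuous_on ({0..e} \<times> {0..e}) (\<lambda>z. ?T (fst z / e, snd z / e))"
    by (rule continuous_on_compose2)
  then have "continuous_on ({0..e} \<times> {0..e}) (\<lambda>z. e * ?T (fst z / e, snd z / e))"
    by (rule continuous_on_mult_left)
  then show ?thesis by (rule continuous_on_eq) (use assms(2) in auto)
qed

lemma continuous_underlying_upper_square: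
  assumes "continuous_underlying U e" "e < 1"
  shows "continuous_on ({e..1} \<times> {e..1}) (\<lambda>(x, y). U x y)"
proof -
  let ?S = "\<lambda>(x, y). (U (e + (1 - e) * x) (e + (1 - e) * y) - e) / (1 - e)"
  have "continuous_on ({0..1} \<times> {0..1}) ?S"
    using assms(1) unfolding continuous_underlying_def underlying_tconorm_def by blast
  moreover have "continuous_on ({e..1} \<times> {e..1}) (\<lambda>z. ((fst z - e) / (1 - e), (snd z - e) / (1 - e)))"
    by (intro continuous_intros) (use assms(2) in auto)
  moreover have "(\<lambda>z. ((fst z - e) / (1 - e), (snd z - e) / (1 - e))) ` ({e..1} \<times> {e..1}) \<subseteq> {0..1} \<times> {0..1}"
    using assms(2) by auto
  ultimately have "continuous_on ({e..1} \<times> {e..1}) (\<lambda>z. ?S ((fst z - e) / (1 - e), (snd z - e) / (1 - e)))"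
    by (rule continuous_on_compose2)
  then have "continuous_on ({e..1} \<times> {e..1})
      (\<lambda>z. e + (1 - e) * ?S ((fst z - e) / (1 - e), (snd z - e) / (1 - e)))"
    by (intro continuous_intros)
  then show ?thesis by (rule continuous_on_eq) (use assms(2) in auto)
qed

lemma tendsto_binop_continuous_on:
  assumes "continuous_on (K \<times> K) (\<lambda>(x, y). U x y)" "s \<longlonglongrightarrow> l" "t \<longlonglongrightarrow> m"
    and "\<And>n. s n \<in> K" "\<And>n. t n \<in> K" "l \<in> K" "m \<in> K"
  shows "(\<lambda>n. U (s n) (t n)) \<longlonglongrightarrow> U l m"
  using continuous_on_tendsto_compose[OF assms(1) tendsto_Pair[OF assms(2,3)]] assms(4-7) by auto

lemma continuous_on_binop_compose:
  assumes "continuous_on (K \<times> K) (\<lambda>(x, y). U x y)"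
    and "continuous_on S g" "continuous_on S h" "g ` S \<subseteq> K" "h ` S \<subseteq> K"
  shows "continuous_on S (\<lambda>z. U (g z) (h z))"
  using continuous_on_compose2[OF assms(1) continuous_on_Pair[OF assms(2,3)]] assms(4,5) by auto

lemma continuous_on_mono_onto_unit_interval:
  fixes f :: "real \<Rightarrow> real"
  assumes mono: "\<And>x y. x \<in> {0..1} \<Longrightarrow> y \<in> {0..1} \<Longrightarrow> x \<le> y \<Longrightarrow> f x \<le> f y"
    and onto: "f ` {0..1} = {0..1}"
  shows "continuous_on {0..1} f"
proof -
  define F where "F x = (if x \<in> {0..1} then f x else x)" for x
  have into: "x \<in> {0..1} \<Longrightarrow> f x \<in> {0..1}" for x using onto by blast
  have "y \<in> range F" for y
  proof (cases "y \<in> {0..1}")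
    case True
    then obtain x where "x \<in> {0..1}" "f x = y" using onto by (metis imageE)
    then show ?thesis by (metis F_def rangeI)
  qed (metis F_def rangeI)
  then have "open (range F)" by (metis UNIV_eq_I open_UNIV)
  moreover have "F x \<le> F y" if "x \<le> y" for x y
    using that mono[of x y] into[of x] into[of y] by (auto simp: F_def)
  ultimately have "continuous_on UNIV F" by (intro continuous_onI_mono) auto
  then show ?thesis by (rule continuous_on_eq[OF continuous_on_subset]) (auto simp: F_def)
qed

lemma uninorm_imp_ordered_comm_monoid_on: "uninorm U e \<Longrightarrow> ordered_comm_monoid_on {0..1} U e"
  unfolding uninorm_def ordered_comm_monoid_on_def by blast

text \<open>Translation by an invertible element is a monotone bijection of \<open>[0,1]\<close>, hence continuous.\<close>

lemma uninorm_translation_continuous: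
  assumes "uninorm U e" and c: "c \<in> {0..1}" "c' \<in> {0..1}" "U c c' = e"
  shows "continuous_on {0..1} (\<lambda>x. U x c)"
proof -
  interpret ordered_comm_monoid_on "{0..1}" U e by (rule uninorm_imp_ordered_comm_monoid_on[OF assms(1)])
  have "y \<in> (\<lambda>x. U x c) ` {0..1}" if "y \<in> {0..1}" for y
  proof (rule image_eqI)
    show "y = U (U y c') c" using assoc[OF that c(2,1)] commute[OF c(1,2)] c(3) neutral_right[OF that] by simp
  qed (rule closed[OF that c(2)])
  then have "(\<lambda>x. U x c) ` {0..1} = {0..1}" using closed[OF _ c(1)] by blast
  then show ?thesis
    by (intro continuous_on_mono_onto_unit_interval) (use mono c in auto)
qed

section \<open>Uninorms with continuous underlying functions and a unit\<close>

locale continuous_uninorm_with_unit =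
  fixes U :: "real \<Rightarrow> real \<Rightarrow> real" and e w v :: real
  assumes uninorm: "uninorm U e" and neutral_bounds: "0 < e" "e < 1"
    and underlying_continuous: "continuous_underlying U e"
    and unit_in: "w \<in> {0..1}" "v \<in> {0..1}"
    and unit_inverse: "U w v = e" and neutral_less_unit: "e < w"
begin

sublocale ordered_comm_monoid_on "{0..1}" U e
  by (rule uninorm_imp_ordered_comm_monoid_on[OF uninorm])

lemma continuous_lower: "continuous_on ({0..e} \<times> {0..e}) (\<lambda>(x, y). U x y)"
  by (rule continuous_underlying_lower_square[OF underlying_continuous neutral_bounds(1)])

lemma continuous_upper: "continuous_on ({e..1} \<times> {e..1}) (\<lambda>(x, y). U x y)"
  by (rule continuous_underlying_upper_square[OF underlying_continuous neutral_bounds(2)])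

lemma inverse_less_neutral: "v < e"
  using mono_right[OF neutral_in unit_in(2,1)] unit_inverse neutral_right[OF unit_in(1)] neutral_less_unit
  by force

lemma unit_power_strict_mono: "pow w n < pow w (Suc n)"
proof -
  have "U (pow w (Suc n)) (pow v n) = w"
    using assoc[OF unit_in(1) power_closed power_closed, OF unit_in] power_inverse[OF unit_in unit_inverse]
      neutral_right[OF unit_in(1)] by simp
  then have "pow w n \<noteq> pow w (Suc n)"
    using power_inverse[OF unit_in unit_inverse, of n] neutral_less_unit by auto
  then show ?thesis using power_increasing[OF unit_in(1), of n "Suc n"] neutral_less_unit by simp
qed

lemma inverse_power_strict_antimono: "pow v (Suc n) < pow v n"
proof -
  have "U (pow w n) (pow v (Suc n)) = v"
    using left_commute[OF power_closed unit_in(2) power_closed, OF unit_in(1) unit_in(2)]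
      power_inverse[OF unit_in unit_inverse] neutral_right[OF unit_in(2)] by simp
  then have "pow v n \<noteq> pow v (Suc n)"
    using power_inverse[OF unit_in unit_inverse, of n] inverse_less_neutral by auto
  then show ?thesis using power_decreasing[OF unit_in(2), of n "Suc n"] inverse_less_neutral by simp
qed

lemma unit_powers_bdd: "bdd_above (range (pow w))" "bdd_below (range (pow v))"
  using power_closed unit_in by (auto intro!: bdd_aboveI[of _ 1] bdd_belowI[of _ 0])

text \<open>The idempotents \<open>a < e < d\<close> of the theorem are the limits of the powers of \<open>v\<close> and of \<open>w\<close>.\<close>

definition lower_limit :: real where "lower_limit = (INF n. pow v n)"
definition upper_limit :: real where "upper_limit = (SUP n. pow w n)"

lemma unit_powers_tendsto: "pow w \<longlonglongrightarrow> upper_limit" "pow v \<longlonglongrightarrow> lower_limit"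
  unfolding upper_limit_def lower_limit_def using unit_power_strict_mono inverse_power_strict_antimono
  by (auto intro!: LIMSEQ_incseq_SUP LIMSEQ_decseq_INF unit_powers_bdd incseq_SucI decseq_SucI less_imp_le)

lemma unit_power_less_upper_limit: "pow w n < upper_limit"
  using unit_power_strict_mono[of n] cSUP_upper[OF _ unit_powers_bdd(1), of "Suc n"]
  unfolding upper_limit_def by simp

lemma lower_limit_less_inverse_power: "lower_limit < pow v n"
  using inverse_power_strict_antimono[of n] cINF_lower[OF unit_powers_bdd(2), of "Suc n"]
  unfolding lower_limit_def by simp

lemma neutral_le_unit_power: "e \<le> pow w n"
  using power_increasing[OF unit_in(1), of 0 n] neutral_less_unit by simp

lemma inverse_power_le_neutral: "pow v n \<le> e"
  using power_decreasing[OF unit_in(2), of 0 n] inverse_less_neutral by simp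

lemma limits_bounds: "0 \<le> lower_limit" "lower_limit < e" "e < upper_limit" "upper_limit \<le> 1"
  using lower_limit_less_inverse_power[of 0] unit_power_less_upper_limit[of 0] power_closed unit_in
  unfolding lower_limit_def upper_limit_def by (auto intro!: cINF_greatest cSUP_least)

lemma limits_in: "lower_limit \<in> {0..1}" "upper_limit \<in> {0..1}"
  using limits_bounds neutral_bounds by auto

lemma upper_limit_absorbs_unit: "U upper_limit w = upper_limit"
proof -
  have "(\<lambda>n. U (pow w n) w) \<longlonglongrightarrow> U upper_limit w"
    by (rule tendsto_binop_continuous_on[OF continuous_upper unit_powers_tendsto(1) tendsto_const])
      (use neutral_le_unit_power power_closed unit_in limits_bounds neutral_less_unit in auto)
  moreover have "(\<lambda>n. U (pow w n) w) = (\<lambda>n. pow w (Suc n))"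
    using commute[OF power_closed unit_in(1)] unit_in by simp
  ultimately show ?thesis using LIMSEQ_unique LIMSEQ_Suc[OF unit_powers_tendsto(1)] by metis
qed

lemma lower_limit_absorbs_inverse: "U lower_limit v = lower_limit"
proof -
  have "(\<lambda>n. U (pow v n) v) \<longlonglongrightarrow> U lower_limit v"
    by (rule tendsto_binop_continuous_on[OF continuous_lower unit_powers_tendsto(2) tendsto_const])
      (use inverse_power_le_neutral power_closed unit_in limits_bounds inverse_less_neutral in auto)
  moreover have "(\<lambda>n. U (pow v n) v) = (\<lambda>n. pow v (Suc n))"
    using commute[OF power_closed unit_in(2)] unit_in by simp
  ultimately show ?thesis using LIMSEQ_unique LIMSEQ_Suc[OF unit_powers_tendsto(2)] by metis
qed

lemma limits_absorb_units:
  "U upper_limit w = upper_limit" "U upper_limit v = upper_limit"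
  "U lower_limit w = lower_limit" "U lower_limit v = lower_limit"
  using upper_limit_absorbs_unit lower_limit_absorbs_inverse
    assoc[OF limits_in(2) unit_in] assoc[OF limits_in(1) unit_in(2,1)] commute[OF unit_in]
    unit_inverse neutral_right[OF limits_in(1)] neutral_right[OF limits_in(2)]
  by simp_all

lemma limits_absorb_unit_powers: "U upper_limit (pow w n) = upper_limit" "U lower_limit (pow v n) = lower_limit"
proof (induction n)
  case (Suc n)
  then show "U upper_limit (pow w (Suc n)) = upper_limit" "U lower_limit (pow v (Suc n)) = lower_limit"
    using assoc[OF limits_in(2) unit_in(1) power_closed[OF unit_in(1)]]
      assoc[OF limits_in(1) unit_in(2) power_closed[OF unit_in(2)]] limits_absorb_units by simp_all
qed (simp_all add: neutral_right[OF limits_in(1)] neutral_right[OF limits_in(2)])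

lemma limits_idempotent: "U upper_limit upper_limit = upper_limit" "U lower_limit lower_limit = lower_limit"
proof -
  have "(\<lambda>n. U upper_limit (pow w n)) \<longlonglongrightarrow> U upper_limit upper_limit"
    by (rule tendsto_binop_continuous_on[OF continuous_upper tendsto_const unit_powers_tendsto(1)])
      (use neutral_le_unit_power power_closed unit_in limits_bounds in auto)
  then show "U upper_limit upper_limit = upper_limit"
    using LIMSEQ_unique[OF _ tendsto_const] limits_absorb_unit_powers(1) by simp
  have "(\<lambda>n. U lower_limit (pow v n)) \<longlonglongrightarrow> U lower_limit lower_limit"
    by (rule tendsto_binop_continuous_on[OF continuous_lower tendsto_const unit_powers_tendsto(2)])
      (use inverse_power_le_neutral power_closed unit_in limits_bounds in auto)
  then show "U lower_limit lower_limit = lower_limit"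
    using LIMSEQ_unique[OF _ tendsto_const] limits_absorb_unit_powers(2) by simp
qed

abbreviation group_part :: "real set" where
  "group_part \<equiv> {lower_limit<..<upper_limit}"

lemma group_part_subset: "x \<in> group_part \<Longrightarrow> x \<in> {0..1}"
  using limits_bounds by auto

lemma powers_in_group_part: "pow w n \<in> group_part" "pow v n \<in> group_part" "e \<in> group_part"
  using neutral_le_unit_power[of n] unit_power_less_upper_limit[of n] inverse_power_le_neutral[of n]
    lower_limit_less_inverse_power[of n] limits_bounds by auto

lemma group_part_bounded_by_powers:
  assumes "x \<in> group_part" obtains n where "pow v n \<le> x" "x \<le> pow w n"
proof -
  obtain n where "x < pow w n"
    using assms less_cSUP_iff[OF _ unit_powers_bdd(1)] unfolding upper_limit_def by auto
  moreover obtain m where "pow v m < x"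
    using assms cINF_less_iff[OF _ unit_powers_bdd(2)] unfolding lower_limit_def by auto
  ultimately show ?thesis
    using that[of "max n m"] power_increasing[OF unit_in(1), of n "max n m"] neutral_less_unit
      power_decreasing[OF unit_in(2), of m "max n m"] inverse_less_neutral by fastforce
qed

lemma group_part_closed:
  assumes x: "x \<in> group_part" and y: "y \<in> group_part" shows "U x y \<in> group_part"
proof -
  obtain n m where "pow v n \<le> x" "x \<le> pow w n" "pow v m \<le> y" "y \<le> pow w m"
    using group_part_bounded_by_powers x y by metis
  then have "U (pow v n) (pow v m) \<le> U x y" "U x y \<le> U (pow w n) (pow w m)"
    using group_part_subset x y power_closed unit_in by (auto intro!: mono_both)
  then show ?thesis
    using unit_power_less_upper_limit[of "n + m"] lower_limit_less_inverse_power[of "n + m"]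
    by (simp add: power_add[OF unit_in(1), of n m] power_add[OF unit_in(2), of n m])
qed

lemma exists_translation_upper:
  assumes "x \<in> {e..1}" "e \<le> p" "p \<le> q" "q \<le> 1" "U x p \<le> t" "t \<le> U x q"
  obtains z where "p \<le> z" "z \<le> q" "U x z = t"
proof -
  have "continuous_on {p..q} (\<lambda>z. U x z)"
    by (rule continuous_on_binop_compose[OF continuous_upper continuous_on_const continuous_on_id])
      (use assms in auto)
  then show ?thesis using IVT'[of "\<lambda>z. U x z" p t q] assms that by auto
qed

lemma exists_translation_lower:
  assumes "x \<in> {0..e}" "0 \<le> p" "p \<le> q" "q \<le> e" "U x p \<le> t" "t \<le> U x q"
  obtains z where "p \<le> z" "z \<le> q" "U x z = t"
proof -
  have "continuous_on {p..q} (\<lambda>z. U x z)"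
    by (rule continuous_on_binop_compose[OF continuous_lower continuous_on_const continuous_on_id])
      (use assms in auto)
  then show ?thesis using IVT'[of "\<lambda>z. U x z" p t q] assms that by auto
qed

lemma group_part_inverse:
  assumes x: "x \<in> group_part" shows "\<exists>y\<in>group_part. U x y = e"
proof -
  have x01: "x \<in> {0..1}" using group_part_subset x .
  obtain n where n: "pow v n \<le> x" "x \<le> pow w n" using group_part_bounded_by_powers x by blast
  have wn: "pow w n \<in> {0..1}" and vn: "pow v n \<in> {0..1}" using power_closed unit_in by auto
  have inv: "U (pow w n) (pow v n) = e" by (rule power_inverse[OF unit_in unit_inverse])
  consider "e \<le> x" | "x \<le> e" by linarith
  then show ?thesis
  proof cases
    case 1
    have "pow w n \<le> U x (pow w n)" using mono[OF neutral_in x01 wn 1] neutral[OF wn] by simp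
    then obtain z where z: "e \<le> z" "z \<le> pow w n" "U x z = pow w n"
      using exists_translation_upper[of x e "pow w n" "pow w n"] 1 n x01 wn neutral_le_unit_power
      by (auto simp: neutral_right[OF x01])
    have z01: "z \<in> {0..1}" using z wn neutral_in by auto
    have "U x (U z (pow v n)) = e" using assoc[OF x01 z01 vn] z inv by simp
    moreover have "pow v n \<le> U z (pow v n)" "U z (pow v n) \<le> e"
      using mono[OF neutral_in z01 vn z(1)] mono[OF z01 wn vn z(2)] neutral[OF vn] inv by simp_all
    then have "U z (pow v n) \<in> group_part"
      using lower_limit_less_inverse_power[of n] limits_bounds by auto
    ultimately show ?thesis by blast
  next
    case 2
    have "U x (pow v n) \<le> pow v n" using mono[OF x01 neutral_in vn 2] neutral[OF vn] by simp
    then obtain z where z: "pow v n \<le> z" "z \<le> e" "U x z = pow v n"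
      using exists_translation_lower[of x "pow v n" e "pow v n"] 2 n x01 vn inverse_power_le_neutral
      by (auto simp: neutral_right[OF x01])
    have z01: "z \<in> {0..1}" using z vn neutral_in by auto
    have "U x (U z (pow w n)) = e" using assoc[OF x01 z01 wn] z inv commute[OF wn vn] by simp
    moreover have "e \<le> U z (pow w n)" "U z (pow w n) \<le> pow w n"
      using mono[OF vn z01 wn z(1)] mono[OF z01 neutral_in wn z(2)] neutral[OF wn] inv commute[OF wn vn]
      by simp_all
    then have "U z (pow w n) \<in> group_part"
      using unit_power_less_upper_limit[of n] limits_bounds by auto
    ultimately show ?thesis by blast
  qed
qed

lemma group_part_halving:
  assumes x: "x \<in> group_part" and ex: "e < x" shows "\<exists>z\<in>group_part. U z z = x"
proof -
  have x01: "x \<in> {0..1}" using group_part_subset x .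
  have "continuous_on {e..x} (\<lambda>z. U z z)"
    by (rule continuous_on_binop_compose[OF continuous_upper continuous_on_id continuous_on_id])
      (use x01 in auto)
  moreover have "x \<le> U x x" using mono_right[OF neutral_in x01 x01] ex neutral_right[OF x01] by simp
  ultimately obtain z where "e \<le> z" "z \<le> x" "U z z = x"
    using IVT'[of "\<lambda>z. U z z" e x x] ex neutral[OF neutral_in] by auto
  moreover have "z \<in> group_part" using calculation x limits_bounds by auto
  ultimately show ?thesis by blast
qed

text \<open>The powers of \<open>z > e\<close> converge to a fixed point of translation by \<open>z\<close>; no element of
  the group part is such a fixed point, so the limit lies beyond the group part.\<close>

lemma group_part_archimedean:
  assumes x: "x \<in> group_part" and z: "z \<in> group_part" and ez: "e < z"
  shows "\<exists>n. x \<le> pow z n"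
proof -
  have z01: "z \<in> {0..1}" using group_part_subset z .
  have inc: "incseq (pow z)" using power_increasing[OF z01] ez by (simp add: incseq_def)
  have bdd: "bdd_above (range (pow z))" using power_closed[OF z01] by (auto intro!: bdd_aboveI[of _ 1])
  define L where "L = (SUP n. pow z n)"
  have lim: "pow z \<longlonglongrightarrow> L" unfolding L_def by (rule LIMSEQ_incseq_SUP[OF bdd inc])
  have L: "e \<le> L" "L \<le> 1"
    unfolding L_def using power_closed[OF z01] cSUP_upper[of 0 UNIV "pow z", OF UNIV_I bdd]
    by (auto intro!: cSUP_least)
  have "(\<lambda>n. U (pow z n) z) \<longlonglongrightarrow> U L z"
    by (rule tendsto_binop_continuous_on[OF continuous_upper lim tendsto_const])
      (use power_increasing[OF z01, of 0] ez power_closed[OF z01] L z01 in auto)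
  moreover have "(\<lambda>n. U (pow z n) z) = (\<lambda>n. pow z (Suc n))"
    using commute[OF power_closed[OF z01] z01] by simp
  ultimately have Lz: "U L z = L" using LIMSEQ_unique LIMSEQ_Suc[OF lim] by metis
  have "x < L"
  proof (rule ccontr)
    assume "\<not> x < L"
    then have "L \<in> group_part" using x L limits_bounds by auto
    then obtain L' where L': "L' \<in> group_part" "U L L' = e" using group_part_inverse by blast
    have L01: "L \<in> {0..1}" "L' \<in> {0..1}" using group_part_subset \<open>L \<in> group_part\<close> L'(1) by auto
    have "z = U L' (U L z)"
      using assoc[OF L01(2,1) z01] commute[OF L01] L'(2) neutral[OF z01] by simp
    then show False using Lz L'(2) commute[OF L01] ez by simp
  qed
  then obtain n where "x < pow z n" unfolding L_def using less_cSUP_iff[OF _ bdd] by blast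
  then show ?thesis by (auto intro: less_imp_le)
qed

lemma group_part_archimedean_group: "archimedean_group_on_interval group_part U e w v"
proof -
  have "ordered_comm_monoid_on group_part U e"
    unfolding ordered_comm_monoid_on_def
    using group_part_closed powers_in_group_part(3) assoc commute neutral mono group_part_subset by meson
  then show ?thesis
    unfolding archimedean_group_on_interval_def archimedean_group_on_interval_axioms_def
    using group_part_inverse powers_in_group_part(1,2)[of 1] unit_inverse neutral_less_unit group_part_archimedean
      group_part_halving neutral_right unit_in is_interval_1
    by auto
qed

lemma group_part_additive_iso:
  "\<exists>h :: real \<Rightarrow> real. strict_mono_on group_part h \<and>
     (\<forall>x\<in>group_part. \<forall>y\<in>group_part. h (U x y) = h x + h y) \<and> (\<forall>r. \<exists>x\<in>group_part. h x = r)"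
  by (rule archimedean_group_on_interval.hoelder_embedding[OF group_part_archimedean_group])

text \<open>Every \<open>x \<le> a\<close> is a translate \<open>U a z\<close> of \<open>a\<close> (and every \<open>x \<ge> d\<close> one of \<open>d\<close>), so it absorbs
  the units just as \<open>a\<close> and \<open>d\<close> do.\<close>

lemma outside_group_part_absorbs_units:
  assumes "x \<in> {0..lower_limit} \<union> {upper_limit..1}"
  shows "U x w = x" "U x v = x"
proof -
  obtain c z where c: "c \<in> {lower_limit, upper_limit}" and z: "z \<in> {0..1}" and x: "x = U c z"
  proof (cases "x \<le> lower_limit")
    case True
    have "U lower_limit 0 \<le> U e 0" using mono[OF limits_in(1) neutral_in] limits_bounds by simp
    then obtain z where "0 \<le> z" "z \<le> e" "U lower_limit z = x"
      using exists_translation_lower[of lower_limit 0 e x] True assms limits_bounds neutral_bounds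
      by (auto simp: neutral neutral_right[OF limits_in(1)])
    then show ?thesis using that[of lower_limit z] neutral_bounds by auto
  next
    case False
    have "U e 1 \<le> U upper_limit 1" using mono[OF neutral_in limits_in(2)] limits_bounds by simp
    then obtain z where "e \<le> z" "z \<le> 1" "U upper_limit z = x"
      using exists_translation_upper[of upper_limit e 1 x] False assms limits_bounds neutral_bounds
      by (auto simp: neutral neutral_right[OF limits_in(2)])
    then show ?thesis using that[of upper_limit z] neutral_bounds by auto
  qed
  have c01: "c \<in> {0..1}" using c limits_in by auto
  show "U x w = x" "U x v = x"
    using x assoc[OF c01 z unit_in(1)] assoc[OF c01 unit_in(1) z] assoc[OF c01 z unit_in(2)]
      assoc[OF c01 unit_in(2) z] commute[OF z unit_in(1)] commute[OF z unit_in(2)] c limits_absorb_units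
    by auto
qed

lemma group_part_representable:
  "\<exists>V f. representable V f \<and> linear_transform_on U lower_limit upper_limit V"
proof -
  obtain h :: "real \<Rightarrow> real" where h: "strict_mono_on group_part h"
    "\<forall>x\<in>group_part. \<forall>y\<in>group_part. h (U x y) = h x + h y" "\<forall>r. \<exists>x\<in>group_part. h x = r"
    using group_part_additive_iso by blast
  show ?thesis
    using limits_bounds h group_part_closed
    by (intro representable_linear_transform_of_additive_iso[of _ _ h]) auto
qed

text \<open>The twisted operation is again a group on the group part, isomorphic to \<open>(\<real>,+)\<close> by the
  additive isomorphism of \<open>U\<close> shifted by a constant.\<close>

lemma twisted_group_part_representable:
  assumes u: "u \<in> group_part" and c: "c \<in> group_part" and uc: "U u c = e"
    and twist: "\<And>x y. x \<in> {0..1} \<Longrightarrow> y \<in> {0..1} \<Longrightarrow> U' x y = U (U x u) y"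
  shows "\<exists>V f. representable V f \<and> linear_transform_on U' lower_limit upper_limit V"
proof -
  obtain h :: "real \<Rightarrow> real" where h: "strict_mono_on group_part h"
    "\<And>x y. x \<in> group_part \<Longrightarrow> y \<in> group_part \<Longrightarrow> h (U x y) = h x + h y"
    "\<forall>r. \<exists>x\<in>group_part. h x = r"
    using group_part_additive_iso by blast
  have "h e = 0" using h(2)[of e e] neutral[OF neutral_in] powers_in_group_part(3) by simp
  then have hu: "h u = - h c" using h(2)[OF u c] uc by simp
  have closed': "U' x y \<in> group_part" if "x \<in> group_part" "y \<in> group_part" for x y
    using twist group_part_subset group_part_closed that u by simp
  have additive': "h (U' x y) - h c = (h x - h c) + (h y - h c)"
    if "x \<in> group_part" "y \<in> group_part" for x y
    using twist group_part_subset group_part_closed that u h(2) hu by simp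
  have "strict_mono_on group_part (\<lambda>x. h x - h c)"
    using h(1) by (simp add: strict_mono_on_def)
  moreover have "\<forall>r. \<exists>x\<in>group_part. h x - h c = r"
    using h(3) by (metis add_diff_cancel_right')
  ultimately show ?thesis
    using limits_bounds closed' additive'
    by (intro representable_linear_transform_of_additive_iso[of _ _ "\<lambda>x. h x - h c"]) auto
qed

end

section \<open>Twisted uninorms\<close>

lemma continuous_on_twisted_square:
  assumes U: "continuous_on (K \<times> K) (\<lambda>(x, y). U x y)" "\<And>x y. x \<in> K \<Longrightarrow> y \<in> K \<Longrightarrow> U x y \<in> {0..1}"
    and \<tau>: "continuous_on {0..1} \<tau>" and \<sigma>: "continuous_on {0..1} \<sigma>"
    and \<alpha>: "continuous_on {0..1} \<alpha>" "\<alpha> ` {0..1} \<subseteq> {0..1}" "\<tau> ` \<alpha> ` {0..1} \<subseteq> K"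
  shows "continuous_on ({0..1} \<times> {0..1}) (\<lambda>z. \<sigma> (U (\<tau> (\<alpha> (fst z))) (\<tau> (\<alpha> (snd z)))))"
proof -
  have \<tau>\<alpha>: "continuous_on {0..1} (\<lambda>x. \<tau> (\<alpha> x))"
    using continuous_on_compose[OF \<alpha>(1)] \<tau> \<alpha>(2) continuous_on_subset unfolding comp_def by blast
  have "continuous_on ({0..1} \<times> {0..1}) (\<lambda>z. \<tau> (\<alpha> (fst z)))"
    by (rule continuous_on_compose2[OF \<tau>\<alpha> continuous_on_fst[OF continuous_on_id]]) auto
  moreover have "continuous_on ({0..1} \<times> {0..1}) (\<lambda>z. \<tau> (\<alpha> (snd z)))"
    by (rule continuous_on_compose2[OF \<tau>\<alpha> continuous_on_snd[OF continuous_on_id]]) auto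
  ultimately have "continuous_on ({0..1} \<times> {0..1}) (\<lambda>z. U (\<tau> (\<alpha> (fst z))) (\<tau> (\<alpha> (snd z))))"
    by (rule continuous_on_binop_compose[OF U(1)]) (use \<alpha>(3) in auto)
  then show ?thesis
    by (rule continuous_on_compose2[OF \<sigma>]) (use \<alpha>(3) U(2) in \<open>auto simp: image_subset_iff\<close>)
qed

lemma continuous_underlying_twist:
  assumes U1: "uninorm U1 e1" "continuous_underlying U1 e1" "0 < e1" "e1 < 1"
    and e2: "0 < e2" "e2 < 1" and u: "u \<in> {0..1}" "U1 u e2 = e1"
    and twist: "\<And>s y. s \<in> {0..1} \<Longrightarrow> y \<in> {0..1} \<Longrightarrow> U2 s y = U1 (U1 s u) y"
  shows "continuous_underlying U2 e2"
proof -
  interpret ordered_comm_monoid_on "{0..1}" U1 e1 by (rule uninorm_imp_ordered_comm_monoid_on[OF U1(1)])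
  have e2_in: "e2 \<in> {0..1}" using e2 by simp
  have \<tau>: "continuous_on {0..1} (\<lambda>x. U1 x u)"
    by (rule uninorm_translation_continuous[OF U1(1) u(1) e2_in u(2)])
  have \<sigma>: "continuous_on {0..1} (\<lambda>x. U1 x e2)"
    by (rule uninorm_translation_continuous[OF U1(1) e2_in u(1)]) (use u commute e2_in in auto)
  have U2_eq: "U2 p q = U1 (U1 (U1 p u) (U1 q u)) e2" if "p \<in> {0..1}" "q \<in> {0..1}" for p q
    using assoc[OF closed[OF that(1) u(1)] closed[OF that(2) u(1)] e2_in] assoc[OF that(2) u(1) e2_in]
      u(2) neutral_right[OF that(2)] twist[OF that] by simp
  have \<tau>_lower: "U1 x u \<in> {0..e1}" if "x \<in> {0..e2}" for x
    using mono[of x e2 u] closed[of x u] commute[OF e2_in u(1)] that u e2 by auto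
  have \<tau>_upper: "U1 x u \<in> {e1..1}" if "x \<in> {e2..1}" for x
    using mono[of e2 x u] closed[of x u] commute[OF e2_in u(1)] that u e2 by auto
  have "continuous_on ({0..1} \<times> {0..1}) (\<lambda>z. U1 (U1 (U1 (e2 * fst z) u) (U1 (e2 * snd z) u)) e2)"
    by (rule continuous_on_twisted_square[OF continuous_underlying_lower_square[OF U1(2,3)] _ \<tau> \<sigma>,
          of "\<lambda>t. e2 * t"])
      (use closed \<tau>_lower e2 U1(3,4) in \<open>auto intro!: continuous_intros simp: image_subset_iff mult_le_one\<close>)
  then have "continuous_on ({0..1} \<times> {0..1})
      (\<lambda>z. U1 (U1 (U1 (e2 * fst z) u) (U1 (e2 * snd z) u)) e2 / e2)"
    by (rule continuous_on_divide[OF _ continuous_on_const]) (use e2 in auto)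
  then have T: "continuous_on ({0..1} \<times> {0..1}) (\<lambda>(x, y). underlying_tnorm U2 e2 x y)"
    by (rule continuous_on_eq) (use U2_eq e2 in \<open>auto simp: underlying_tnorm_def mult_le_one\<close>)
  have affine: "e2 + (1 - e2) * t \<in> {e2..1}" if "t \<in> {0..1}" for t
  proof -
    have "0 \<le> (1 - e2) * t" "(1 - e2) * t \<le> 1 - e2" using that e2 by (simp_all add: mult_le_cancel_left1)
    then show ?thesis unfolding atLeastAtMost_iff by linarith
  qed
  have "continuous_on ({0..1} \<times> {0..1})
      (\<lambda>z. U1 (U1 (U1 (e2 + (1 - e2) * fst z) u) (U1 (e2 + (1 - e2) * snd z) u)) e2)"
    by (rule continuous_on_twisted_square[OF continuous_underlying_upper_square[OF U1(2,4)] _ \<tau> \<sigma>,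
          of "\<lambda>t. e2 + (1 - e2) * t"])
      (use closed \<tau>_upper affine e2 U1(3) in \<open>auto intro!: continuous_intros simp: image_subset_iff\<close>)
  then have "continuous_on ({0..1} \<times> {0..1})
      (\<lambda>z. (U1 (U1 (U1 (e2 + (1 - e2) * fst z) u) (U1 (e2 + (1 - e2) * snd z) u)) e2 - e2) / (1 - e2))"
    by (intro continuous_on_divide continuous_on_diff continuous_on_const) (use e2 in auto)
  then have S: "continuous_on ({0..1} \<times> {0..1}) (\<lambda>(x, y). underlying_tconorm U2 e2 x y)"
    by (rule continuous_on_eq) (use U2_eq affine e2 in \<open>auto simp: underlying_tconorm_def\<close>)
  show ?thesis unfolding continuous_underlying_def using T S by blast
qed

lemma negation_equation_twist:
  assumes N1: "fuzzy_negation N1" and N2: "fuzzy_negation N2" "continuous_on {0..1} N2"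
    and U1: "uninorm U1 e1" and U2: "uninorm U2 e2"
    and eq: "\<forall>x\<in>{0..1}. \<forall>y\<in>{0..1}. U1 (N1 x) y = U2 (N2 x) y"
  shows "U1 (U2 e1 e1) e2 = e1"
    and "s \<in> {0..1} \<Longrightarrow> y \<in> {0..1} \<Longrightarrow> U2 s y = U1 (U1 s (U2 e1 e1)) y"
proof -
  interpret U1: ordered_comm_monoid_on "{0..1}" U1 e1 by (rule uninorm_imp_ordered_comm_monoid_on[OF U1])
  interpret U2: ordered_comm_monoid_on "{0..1}" U2 e2 by (rule uninorm_imp_ordered_comm_monoid_on[OF U2])
  have through_e1: "U2 s y = U1 (U2 s e1) y" if s: "s \<in> {0..1}" and y: "y \<in> {0..1}" for s y
  proof -
    have "N2 1 \<le> s" "s \<le> N2 0" using N2(1) s unfolding fuzzy_negation_def by auto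
    then obtain x where x: "x \<in> {0..1}" "N2 x = s" using IVT2'[of N2 1 s 0] N2(2) by auto
    have "N1 x \<in> {0..1}" using N1 x(1) unfolding fuzzy_negation_def by blast
    then have "N1 x = U1 (N1 x) e1" by (simp add: U1.neutral_right)
    also have "\<dots> = U2 s e1" using eq x U1.neutral_in by auto
    finally have "N1 x = U2 s e1" .
    moreover have "U1 (N1 x) y = U2 s y" using eq x y by auto
    ultimately show ?thesis by simp
  qed
  let ?u = "U2 e1 e1"
  have u_in: "?u \<in> {0..1}" using U1.neutral_in U2.closed by blast
  show ue: "U1 ?u e2 = e1"
    using through_e1[OF U1.neutral_in U2.neutral_in] U2.neutral_right[OF U1.neutral_in] by simp
  assume s: "s \<in> {0..1}" and y: "y \<in> {0..1}"
  have f_in: "U2 s e1 \<in> {0..1}" using U2.closed s U1.neutral_in by blast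
  have "U1 (U2 s e1) e2 = s"
    using through_e1[OF s U2.neutral_in] U2.neutral_right[OF s] by simp
  then have "U2 s e1 = U1 s ?u"
    using U1.assoc[OF f_in U2.neutral_in u_in] U1.commute[OF u_in U2.neutral_in] ue U1.neutral_right[OF f_in]
    by simp
  then show "U2 s y = U1 (U1 s ?u) y" using through_e1[OF s y] by simp
qed

lemma negations_eq_if_neutrals_eq:
  assumes "fuzzy_negation N1" "fuzzy_negation N2" "uninorm U1 e" "uninorm U2 e"
    and eq: "\<forall>x\<in>{0..1}. \<forall>y\<in>{0..1}. U1 (N1 x) y = U2 (N2 x) y" and x: "x \<in> {0..1}"
  shows "N1 x = N2 x"
proof -
  interpret U1: ordered_comm_monoid_on "{0..1}" U1 e by (rule uninorm_imp_ordered_comm_monoid_on[OF assms(3)])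
  interpret U2: ordered_comm_monoid_on "{0..1}" U2 e by (rule uninorm_imp_ordered_comm_monoid_on[OF assms(4)])
  have "N1 x \<in> {0..1}" "N2 x \<in> {0..1}" using assms(1,2) x unfolding fuzzy_negation_def by auto
  then have "N1 x = U1 (N1 x) e" "U2 (N2 x) e = N2 x" by (simp_all add: U1.neutral_right U2.neutral_right)
  then show ?thesis using eq x U1.neutral_in by auto
qed

lemma unit_above_neutral:
  assumes "uninorm U e" "x \<in> {0..1}" "y \<in> {0..1}" "U x y = e" "x \<noteq> e"
  obtains w v where "{w, v} = {x, y}" "U w v = e" "e < w"
proof -
  interpret ordered_comm_monoid_on "{0..1}" U e by (rule uninorm_imp_ordered_comm_monoid_on[OF assms(1)])
  consider "e < x" | "e < y" | "x < e" "y \<le> e" using assms(5) by linarith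
  then show ?thesis
  proof cases
    case 1
    then show ?thesis using that[of x y] assms(4) by simp
  next
    case 2
    then show ?thesis using that[of y x] assms(4) commute[OF assms(2,3)] by (simp add: insert_commute)
  next
    case 3
    then have "U x y < e" using mono_right[OF assms(3) neutral_in assms(2)] neutral_right[OF assms(2)] by simp
    then show ?thesis using assms(4) by simp
  qed
qed

theorem mainTheorem7:
  fixes N1 N2 :: "real \<Rightarrow> real" and U1 U2 :: "real \<Rightarrow> real \<Rightarrow> real" and e1 e2 :: real
  assumes "fuzzy_negation N1" "continuous_on {0..1} N1"
    and "fuzzy_negation N2" "continuous_on {0..1} N2"
    and "uninorm U1 e1" "disjunctive U1" "0 < e1" "e1 < 1"
    and "uninorm U2 e2" "disjunctive U2" "0 < e2" "e2 < 1"
    and "\<forall>x\<in>{0..1}. \<forall>y\<in>{0..1}. U1 (N1 x) y = U2 (N2 x) y"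
    and "continuous_underlying U1 e1"
    and "\<exists>x\<in>{0..1}. N1 x \<noteq> N2 x"
  shows "continuous_underlying U2 e2 \<and>
    (\<exists>a d. idempotent_point U1 a \<and> idempotent_point U1 d \<and> a < d \<and>
       (\<exists>V1 f1. representable V1 f1 \<and> linear_transform_on U1 a d V1) \<and>
       (\<exists>V2 f2. representable V2 f2 \<and> linear_transform_on U2 a d V2) \<and>
       (\<forall>x\<in>{0..a} \<union> {d..1}. \<forall>y\<in>{0..a} \<union> {d..1}. U1 x y = U2 x y))"
proof -
  let ?u = "U2 e1 e1"
  note twist = negation_equation_twist[OF assms(1,3,4,5,9,13)]
  interpret U1: ordered_comm_monoid_on "{0..1}" U1 e1 by (rule uninorm_imp_ordered_comm_monoid_on[OF assms(5)])
  have e2_in: "e2 \<in> {0..1}" using assms(11,12) by simp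
  have u_in: "?u \<in> {0..1}" using assms(9) U1.neutral_in unfolding uninorm_def by blast
  have "e2 \<noteq> e1" using negations_eq_if_neutrals_eq[OF assms(1,3,5)] assms(9,13,15) by auto
  then obtain w v where wv: "{w, v} = {e2, ?u}" "U1 w v = e1" "e1 < w"
    using unit_above_neutral[OF assms(5) e2_in u_in] twist(1) U1.commute[OF u_in e2_in] by metis
  have "w \<in> {e2, ?u}" "v \<in> {e2, ?u}" using wv(1) by (metis insertI1 insert_commute)+
  then interpret continuous_uninorm_with_unit U1 e1 w v
    using assms(5,7,8,14) wv(2,3) e2_in u_in by unfold_locales auto
  have units: "?u \<in> {w, v}" "e2 \<in> {w, v}" using wv(1) by (metis insertI1 insert_commute)+
  then have in_group_part: "?u \<in> group_part" "e2 \<in> group_part"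
    using powers_in_group_part(1,2)[of 1] U1.neutral_right[OF unit_in(1)] U1.neutral_right[OF unit_in(2)] by auto
  have "\<forall>x\<in>{0..lower_limit} \<union> {upper_limit..1}. \<forall>y\<in>{0..lower_limit} \<union> {upper_limit..1}. U1 x y = U2 x y"
    using outside_group_part_absorbs_units twist(2) limits_in units(1) by auto
  moreover have "idempotent_point U1 lower_limit" "idempotent_point U1 upper_limit"
    using limits_idempotent limits_in unfolding idempotent_point_def by auto
  moreover have "lower_limit < upper_limit" using limits_bounds by simp
  ultimately show ?thesis
    using continuous_underlying_twist[OF assms(5,14,7,8,11,12) u_in twist] group_part_representable
      twisted_group_part_representable[OF in_group_part twist] by blast
qed

end
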